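(* Let $\mathcal{C}$ be a finite set of latent classes with cardinality $N_{\mathcal{C}}$, let $\rho$ be a probability distribution on $\mathcal{C}$ with $\rho(c)>0$ for all $c$, and for each $c\in\mathcal{C}$ let $\mathcal{D}_c$ be a distribution on a feature space $\mathcal{X}$. Let $N$ be a number of negative samples satisfying $N=\Omega(N_{\mathcal{C}}\log N_{\mathcal{C}})$. Then for any encoder $f:\mathcal{X}\to\mathbb{R}^d$, $$L_{\mathrm{sup}}(f,\mathcal{C})\le L^\mu_{\mathrm{sup}}(f,\mathcal{C})\le \frac{1}{p^\rho_{cc}(N)}L^N_{\mathrm{un}}(f),$$ where $p^\rho_{cc}(N)$ is the probability that $N$ independent draws from $\rho$ include every element of $\mathcal{C}$ at least once (i.e. all coupons are collected after $N$ draws in an $N_{\mathcal{C}}$-coupon collector problem with draws from $\rho$).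
   Context: Positive pairs are drawn from $\mathcal{D}_{\mathrm{sim}}(x,x^+)=\sum_{c\in\mathcal{C}}\rho(c)\mathcal{D}_c(x)\mathcal{D}_c(x^+)$ and negatives from $\mathcal{D}_{\mathrm{neg}}(x^-)=\sum_{c\in\mathcal{C}}\rho(c)\mathcal{D}_c(x^-)$. The unsupervised loss with $N$ negatives is $$L^N_{\mathrm{un}}(f)=\mathbb{E}_{(x,x^+)\sim\mathcal{D}_{\mathrm{sim}},\,X^-\sim\mathcal{D}_{\mathrm{neg}}^{\otimes N}}\Big[-\log\frac{\exp(f(x)^Tf(x^+))}{\exp(f(x)^Tf(x^+))+\sum_{x^-\in X^-}\exp(f(x)^Tf(x^-))}\Big],$$ where $X^-$ is a tuple of $N$ i.i.d. draws from $\mathcal{D}_{\mathrm{neg}}$. With $\mathcal{D}_{\mathcal{C}}(x,c)=\rho(c)\mathcal{D}_c(x)$, the supervised loss is $$L_{\mathrm{sup}}(f,\mathcal{C})=\inf_{W\in\mathbb{R}^{N_{\mathcal{C}}\times d}}\mathbb{E}_{(x,c)\sim\mathcal{D}_{\mathcal{C}}}\Big[-\log\frac{\exp((Wf(x))_c)}{\sum_{c'\in\mathcal{C}}\exp((Wf(x))_{c'})}\Big],$$ and $L^\mu_{\mathrm{sup}}(f,\mathcal{C})$ is the same expectation evaluated at the mean classifier $W^\mu$ whose row indexed by $c$ is $\mathbb{E}_{x\sim\mathcal{D}_c}[f(x)]$. *)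

theory Defs
  imports "HOL-Probability.Probability"
begin

text \<open>Classes form a finite type 'c (N_C = CARD('c)),
  rho is a probability distribution on the classes, D c is the class-conditional
  distribution on the feature space (a measure on 'x), f is the encoder into real^'d.\<close>

definition D_neg :: "'c pmf \<Rightarrow> ('c \<Rightarrow> 'x measure) \<Rightarrow> 'x measure" where
  "D_neg \<rho> D = measure_pmf \<rho> \<bind> (\<lambda>c. D c)"

definition D_sim :: "'c pmf \<Rightarrow> ('c \<Rightarrow> 'x measure) \<Rightarrow> ('x \<times> 'x) measure" where
  "D_sim \<rho> D = measure_pmf \<rho> \<bind> (\<lambda>c. D c \<Otimes>\<^sub>M D c)"

definition L_un :: "'c pmf \<Rightarrow> ('c \<Rightarrow> 'x measure) \<Rightarrow> nat \<Rightarrow> ('x \<Rightarrow> real^'d) \<Rightarrow> ennreal" where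
  "L_un \<rho> D N f =
     (\<integral>\<^sup>+ p. (\<integral>\<^sup>+ xs.
        ennreal (- ln (exp (f (fst p) \<bullet> f (snd p)) /
                       (exp (f (fst p) \<bullet> f (snd p)) + (\<Sum>i<N. exp (f (fst p) \<bullet> f (xs i))))))
      \<partial>(PiM {..<N} (\<lambda>_. D_neg \<rho> D))) \<partial>(D_sim \<rho> D))"

definition sup_loss_W :: "'c::finite pmf \<Rightarrow> ('c \<Rightarrow> 'x measure) \<Rightarrow> ('x \<Rightarrow> real^'d) \<Rightarrow> ('c \<Rightarrow> real^'d) \<Rightarrow> ennreal" where
  "sup_loss_W \<rho> D f W =
     (\<Sum>c\<in>UNIV. ennreal (pmf \<rho> c) *
        (\<integral>\<^sup>+ x. ennreal (- ln (exp (W c \<bullet> f x) / (\<Sum>c'\<in>UNIV. exp (W c' \<bullet> f x)))) \<partial>(D c)))"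

definition L_sup :: "'c::finite pmf \<Rightarrow> ('c \<Rightarrow> 'x measure) \<Rightarrow> ('x \<Rightarrow> real^'d) \<Rightarrow> ennreal" where
  "L_sup \<rho> D f = (INF W. sup_loss_W \<rho> D f W)"

definition W_mu :: "('c \<Rightarrow> 'x measure) \<Rightarrow> ('x \<Rightarrow> real^'d) \<Rightarrow> 'c \<Rightarrow> real^'d" where
  "W_mu D f c = (\<integral> x. f x \<partial>(D c))"

definition L_sup_mu :: "'c::finite pmf \<Rightarrow> ('c \<Rightarrow> 'x measure) \<Rightarrow> ('x \<Rightarrow> real^'d) \<Rightarrow> ennreal" where
  "L_sup_mu \<rho> D f = sup_loss_W \<rho> D f (W_mu D f)"

definition p_cc :: "'c::finite pmf \<Rightarrow> nat \<Rightarrow> real" where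
  "p_cc \<rho> N = measure (PiM {..<N} (\<lambda>_. measure_pmf \<rho>))
      {cs \<in> space (PiM {..<N} (\<lambda>_. measure_pmf \<rho>)). \<forall>c. \<exists>i<N. cs i = c}"

end

theory Submission
  imports Defs
begin

(* Conditioning on the class c of the positive pair and on the classes cs of the N negatives
   writes L_un as a rho-mixture of class-conditional losses, cs having weight prod_i rho (cs i).
   For a fixed anchor x the contrastive loss is a log-sum-exp expression, convex in the positive
   sample and in each negative sample, so by Jensen's inequality its conditional expectation
   dominates the same expression with every sample replaced by its class mean.  If cs contains
   every class, the negative part of that expression contains every term of the softmax
   denominator of the mean classifier, so the conditional loss dominates the supervised loss of
   the mean classifier.  Dropping the tuples cs that miss a class, whose total weight is
   1 - p_cc, gives p_cc * L_sup_mu <= L_un. *)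

lemma measurable_pmf_kernel:
  assumes "\<And>c. prob_space (M c)" and "\<And>c. sets (M c) = sets S"
  shows "M \<in> measurable (measure_pmf \<rho>) (subprob_algebra S)"
  using assms by (auto simp: space_subprob_algebra prob_space_imp_subprob_space)

lemma prob_space_bind_pmf_kernel:
  assumes "\<And>c. prob_space (M c)" and "\<And>c. sets (M c) = sets S"
  shows "prob_space (measure_pmf \<rho> \<bind> M)"
  using assms by (intro measure_pmf.prob_space_bind[OF _ measurable_pmf_kernel]) auto

lemma nn_integral_bind_pmf_finite:
  fixes \<rho> :: "'c::finite pmf"
  assumes "\<And>c. prob_space (M c)" and "\<And>c. sets (M c) = sets S" and "g \<in> borel_measurable S"
  shows "(\<integral>\<^sup>+x. g x \<partial>(measure_pmf \<rho> \<bind> M)) = (\<Sum>c\<in>UNIV. ennreal (pmf \<rho> c) * (\<integral>\<^sup>+x. g x \<partial>M c))"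
proof -
  have "(\<integral>\<^sup>+x. g x \<partial>(measure_pmf \<rho> \<bind> M)) = (\<integral>\<^sup>+c. \<integral>\<^sup>+x. g x \<partial>M c \<partial>measure_pmf \<rho>)"
    using assms by (intro nn_integral_bind measurable_pmf_kernel)
  also have "\<dots> = (\<Sum>c\<in>UNIV. (\<integral>\<^sup>+x. g x \<partial>M c) * ennreal (pmf \<rho> c))"
    by (rule nn_integral_measure_pmf_support) auto
  finally show ?thesis by (simp add: mult.commute)
qed

lemma sum_PiE_insert:
  assumes "j \<notin> I"
  shows "(\<Sum>cs\<in>PiE (insert j I) T. F cs) = (\<Sum>c\<in>T j. \<Sum>cs\<in>PiE I T. F (cs(j := c)))"
  unfolding PiE_insert_eq sum.cartesian_product
  by (subst sum.reindex[OF inj_combinator[OF assms]]) (simp add: case_prod_beta' comp_def)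

lemma borel_measurable_nn_integral_fun_upd:
  assumes "sigma_finite_measure N" and [measurable_cong]: "sets N = sets S"
    and [measurable]: "h \<in> borel_measurable (PiM (insert j I) (\<lambda>_. S))"
  shows "(\<lambda>x. \<integral>\<^sup>+y. h (x(j := y)) \<partial>N) \<in> borel_measurable (PiM I (\<lambda>_. S))"
proof -
  interpret sigma_finite_measure N by fact
  show ?thesis by (rule borel_measurable_nn_integral) measurable
qed

lemma nn_integral_PiM_insert_bind_pmf:
  fixes \<rho> :: "'c::finite pmf"
  assumes "finite I" and "j \<notin> I" and P: "\<And>c. prob_space (M c)" and S[measurable_cong]: "\<And>c. sets (M c) = sets S"
    and [measurable]: "h \<in> borel_measurable (PiM (insert j I) (\<lambda>_. S))"
  shows "(\<integral>\<^sup>+xs. h xs \<partial>PiM (insert j I) (\<lambda>_. measure_pmf \<rho> \<bind> M)) =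
    (\<Sum>c\<in>UNIV. ennreal (pmf \<rho> c) * (\<integral>\<^sup>+x. \<integral>\<^sup>+y. h (x(j := y)) \<partial>M c \<partial>PiM I (\<lambda>_. measure_pmf \<rho> \<bind> M)))"
proof -
  define \<nu> where "\<nu> = measure_pmf \<rho> \<bind> M"
  have \<nu>_sets[measurable_cong]: "sets \<nu> = sets S"
    unfolding \<nu>_def by (rule sets_bind) (auto simp: S)
  have "prob_space \<nu>"
    unfolding \<nu>_def using P S by (rule prob_space_bind_pmf_kernel)
  then interpret \<nu>: product_sigma_finite "\<lambda>_. \<nu>"
    by (simp add: product_sigma_finite_def prob_space_imp_sigma_finite)
  have upd: "(\<lambda>(x, y). h (x(j := y))) \<in> borel_measurable (PiM I (\<lambda>_. S) \<Otimes>\<^sub>M S)"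
    by measurable
  have [measurable]: "(\<lambda>x. \<integral>\<^sup>+y. h (x(j := y)) \<partial>M c) \<in> borel_measurable (PiM I (\<lambda>_. S))" for c
    using P S by (intro borel_measurable_nn_integral_fun_upd prob_space_imp_sigma_finite) measurable
  have "(\<integral>\<^sup>+xs. h xs \<partial>PiM (insert j I) (\<lambda>_. \<nu>)) = (\<integral>\<^sup>+x. \<integral>\<^sup>+y. h (x(j := y)) \<partial>\<nu> \<partial>PiM I (\<lambda>_. \<nu>))"
    using assms(1,2) by (intro \<nu>.product_nn_integral_insert) measurable
  also have "\<dots> = (\<integral>\<^sup>+x. (\<Sum>c\<in>UNIV. ennreal (pmf \<rho> c) * (\<integral>\<^sup>+y. h (x(j := y)) \<partial>M c)) \<partial>PiM I (\<lambda>_. \<nu>))"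
  proof (intro nn_integral_cong)
    fix x assume "x \<in> space (PiM I (\<lambda>_. \<nu>))"
    then have "x \<in> space (PiM I (\<lambda>_. S))"
      by (simp add: space_PiM sets_eq_imp_space_eq[OF \<nu>_sets])
    from measurable_Pair2[OF upd this] have "(\<lambda>y. h (x(j := y))) \<in> borel_measurable S"
      by simp
    then show "(\<integral>\<^sup>+y. h (x(j := y)) \<partial>\<nu>) = (\<Sum>c\<in>UNIV. ennreal (pmf \<rho> c) * (\<integral>\<^sup>+y. h (x(j := y)) \<partial>M c))"
      unfolding \<nu>_def by (rule nn_integral_bind_pmf_finite[OF P S])
  qed
  also have "\<dots> = (\<Sum>c\<in>UNIV. ennreal (pmf \<rho> c) * (\<integral>\<^sup>+x. \<integral>\<^sup>+y. h (x(j := y)) \<partial>M c \<partial>PiM I (\<lambda>_. \<nu>)))"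
    by (subst nn_integral_sum) (auto simp: nn_integral_cmult)
  finally show ?thesis
    unfolding \<nu>_def .
qed

lemma nn_integral_PiM_bind_pmf:
  fixes \<rho> :: "'c::finite pmf"
  assumes "finite I" and P: "\<And>c. prob_space (M c)" and S[measurable_cong]: "\<And>c. sets (M c) = sets S"
    and "h \<in> borel_measurable (PiM I (\<lambda>_. S))"
  shows "(\<integral>\<^sup>+xs. h xs \<partial>PiM I (\<lambda>_. measure_pmf \<rho> \<bind> M)) =
    (\<Sum>cs\<in>PiE I (\<lambda>_. UNIV). ennreal (\<Prod>i\<in>I. pmf \<rho> (cs i)) * (\<integral>\<^sup>+xs. h xs \<partial>PiM I (\<lambda>i. M (cs i))))"
  using assms(1,4)
proof (induction I arbitrary: h rule: finite_induct)
  case empty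
  then show ?case by (simp add: PiM_empty)
next
  case (insert j I)
  note [measurable] = insert.prems
  have [measurable]: "(\<lambda>x. \<integral>\<^sup>+y. h (x(j := y)) \<partial>M c) \<in> borel_measurable (PiM I (\<lambda>_. S))" for c
    using P S by (intro borel_measurable_nn_integral_fun_upd prob_space_imp_sigma_finite) measurable
  have "(\<integral>\<^sup>+xs. h xs \<partial>PiM (insert j I) (\<lambda>_. measure_pmf \<rho> \<bind> M))
      = (\<Sum>c\<in>UNIV. ennreal (pmf \<rho> c) * (\<integral>\<^sup>+x. \<integral>\<^sup>+y. h (x(j := y)) \<partial>M c \<partial>PiM I (\<lambda>_. measure_pmf \<rho> \<bind> M)))"
    using insert.hyps P S by (intro nn_integral_PiM_insert_bind_pmf) measurable
  also have "\<dots> = (\<Sum>c\<in>UNIV. ennreal (pmf \<rho> c) * (\<Sum>cs\<in>PiE I (\<lambda>_. UNIV). ennreal (\<Prod>i\<in>I. pmf \<rho> (cs i)) *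
       (\<integral>\<^sup>+x. \<integral>\<^sup>+y. h (x(j := y)) \<partial>M c \<partial>PiM I (\<lambda>i. M (cs i)))))"
    by (intro sum.cong refl arg_cong2[where f="(*)"] insert.IH) measurable
  also have "\<dots> = (\<Sum>c\<in>UNIV. \<Sum>cs\<in>PiE I (\<lambda>_. UNIV).
      ennreal (\<Prod>i\<in>insert j I. pmf \<rho> ((cs(j := c)) i)) *
      (\<integral>\<^sup>+xs. h xs \<partial>PiM (insert j I) (\<lambda>i. M ((cs(j := c)) i))))"
    unfolding sum_distrib_left
  proof (intro sum.cong refl)
    fix c cs
    interpret product_sigma_finite "\<lambda>i. M ((cs(j := c)) i)"
      by (simp add: product_sigma_finite_def P prob_space_imp_sigma_finite)
    have "PiM I (\<lambda>i. M ((cs(j := c)) i)) = PiM I (\<lambda>i. M (cs i))"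
      using insert.hyps by (intro PiM_cong) auto
    then have "(\<integral>\<^sup>+xs. h xs \<partial>PiM (insert j I) (\<lambda>i. M ((cs(j := c)) i)))
        = (\<integral>\<^sup>+x. \<integral>\<^sup>+y. h (x(j := y)) \<partial>M c \<partial>PiM I (\<lambda>i. M (cs i)))"
      using insert by (subst product_nn_integral_insert) measurable
    moreover have "(\<Prod>i\<in>insert j I. pmf \<rho> ((cs(j := c)) i)) = pmf \<rho> c * (\<Prod>i\<in>I. pmf \<rho> (cs i))"
      using insert.hyps by (auto intro!: prod.cong)
    ultimately show "ennreal (pmf \<rho> c) * (ennreal (\<Prod>i\<in>I. pmf \<rho> (cs i)) *
        (\<integral>\<^sup>+x. \<integral>\<^sup>+y. h (x(j := y)) \<partial>M c \<partial>PiM I (\<lambda>i. M (cs i))))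
      = ennreal (\<Prod>i\<in>insert j I. pmf \<rho> ((cs(j := c)) i)) *
        (\<integral>\<^sup>+xs. h xs \<partial>PiM (insert j I) (\<lambda>i. M ((cs(j := c)) i)))"
      by (simp add: ennreal_mult prod_nonneg mult.assoc)
  qed
  also have "\<dots> = (\<Sum>cs\<in>PiE (insert j I) (\<lambda>_. UNIV).
      ennreal (\<Prod>i\<in>insert j I. pmf \<rho> (cs i)) * (\<integral>\<^sup>+xs. h xs \<partial>PiM (insert j I) (\<lambda>i. M (cs i))))"
    by (simp only: sum_PiE_insert[OF insert.hyps(2)])
  finally show ?case .
qed

definition covering_draws :: "nat \<Rightarrow> (nat \<Rightarrow> 'c) set" where
  "covering_draws N = {cs \<in> {..<N} \<rightarrow>\<^sub>E UNIV. \<forall>c. \<exists>i<N. cs i = c}"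

lemma measure_PiM_pmf_singleton:
  assumes "finite I" and "cs \<in> I \<rightarrow>\<^sub>E UNIV"
  shows "measure (PiM I (\<lambda>_. measure_pmf \<rho>)) {cs} = (\<Prod>i\<in>I. pmf \<rho> (cs i))"
proof -
  interpret finite_product_prob_space "\<lambda>_. measure_pmf \<rho>" I
    using assms(1) by unfold_locales
  have "{cs} = (\<Pi>\<^sub>E i\<in>I. {cs i})"
    using assms(2) by (simp add: PiE_iff PiE_singleton)
  then show ?thesis
    by (simp add: prob_times measure_pmf_single)
qed

lemma finite_covering_draws: "finite (covering_draws N :: (nat \<Rightarrow> 'c::finite) set)"
proof (rule finite_subset)
  show "covering_draws N \<subseteq> {..<N} \<rightarrow>\<^sub>E (UNIV :: 'c set)"
    by (auto simp: covering_draws_def)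
qed (simp add: finite_PiE)

lemma p_cc_eq_sum:
  fixes \<rho> :: "'c::finite pmf"
  shows "p_cc \<rho> N = (\<Sum>cs\<in>covering_draws N. \<Prod>i<N. pmf \<rho> (cs i))"
proof -
  let ?P = "PiM {..<N} (\<lambda>_. measure_pmf \<rho>)" and ?C = "covering_draws N :: (nat \<Rightarrow> 'c) set"
  interpret prob_space ?P
    by (intro prob_space_PiM measure_pmf.prob_space_axioms)
  have "{cs} \<in> sets ?P" if "cs \<in> ?C" for cs
    using that by (auto simp: covering_draws_def PiE_iff PiE_singleton[symmetric])
  with finite_covering_draws have "measure ?P ?C = (\<Sum>cs\<in>?C. measure ?P {cs})"
    by (rule finite_measure_eq_sum_singleton)
  also have "\<dots> = (\<Sum>cs\<in>?C. \<Prod>i<N. pmf \<rho> (cs i))"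
    by (intro sum.cong refl measure_PiM_pmf_singleton) (auto simp: covering_draws_def)
  finally show ?thesis
    by (simp add: p_cc_def covering_draws_def space_PiM)
qed

lemma covering_draws_nonempty:
  assumes "CARD('c::finite) \<le> N"
  shows "covering_draws N \<noteq> ({} :: (nat \<Rightarrow> 'c) set)"
proof -
  obtain g :: "'c \<Rightarrow> nat" where g: "g ` UNIV \<subseteq> {..<N}" "inj g"
    using card_le_inj[of "UNIV :: 'c set" "{..<N}"] assms by auto
  have "\<exists>i<N. restrict (inv g) {..<N} i = c" for c
    using g by (intro exI[of _ "g c"]) auto
  then have "restrict (inv g) {..<N} \<in> covering_draws N"
    by (simp add: covering_draws_def)
  then show ?thesis by blast
qed

lemma p_cc_pos:
  fixes \<rho> :: "'c::finite pmf"
  assumes "\<And>c. pmf \<rho> c > 0" and "CARD('c) \<le> N"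
  shows "p_cc \<rho> N > 0"
  unfolding p_cc_eq_sum using finite_covering_draws covering_draws_nonempty[OF assms(2)] assms(1)
  by (intro sum_pos prod_pos) auto

lemma exp_ge_tangent: "exp m + exp m * (t - m) \<le> exp (t::real)"
proof -
  have "exp m * (1 + (t - m)) \<le> exp m * exp (t - m)"
    by (intro mult_left_mono exp_ge_add_one_self) simp
  then show ?thesis by (simp add: exp_diff distrib_left)
qed

(* exp (w j) / Z is the gradient of the convex map w |-> ln (A + sum_j exp (w j)) at w, so this is
   its supporting-hyperplane inequality. *)
lemma ln_sum_exp_gradient_le:
  fixes z w :: "'j \<Rightarrow> real"
  assumes "finite J" and "A \<ge> 0"
  defines "Z \<equiv> A + (\<Sum>j\<in>J. exp (w j))"
  shows "ln Z + (\<Sum>j\<in>J. exp (w j) / Z * (z j - w j)) \<le> ln (A + (\<Sum>j\<in>J. exp (z j)))"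
proof (cases "J = {}")
  case False
  define S1 where "S1 = (\<Sum>j\<in>J. exp (w j))"
  define S2 where "S2 = (\<Sum>j\<in>J. exp (w j) * (z j - w j))"
  define m where "m = (\<Sum>j\<in>J. exp (w j) / Z * (z j - w j))"
  have "Z > 0"
    unfolding Z_def using assms(1,2) False by (intro add_nonneg_pos sum_pos) auto
  then have "Z * m = S2"
    by (simp add: m_def S2_def sum_distrib_left)
  have "exp (w j) * (exp m + exp m * (z j - w j - m)) \<le> exp (w j) * exp (z j - w j)" for j
    by (intro mult_left_mono exp_ge_tangent) simp
  then have "exp m * exp (w j) + exp m * (exp (w j) * (z j - w j)) - exp m * m * exp (w j) \<le> exp (z j)" for j
    by (simp add: exp_diff algebra_simps)
  from sum_mono[OF this]
  have "exp m * S1 + exp m * S2 - exp m * m * S1 \<le> (\<Sum>j\<in>J. exp (z j))"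
    by (simp add: S1_def S2_def sum.distrib sum_subtractf sum_distrib_left)
  then have "exp m * S1 + exp m * m * A \<le> (\<Sum>j\<in>J. exp (z j))"
    unfolding \<open>Z * m = S2\<close>[symmetric] Z_def S1_def[symmetric] by (simp add: algebra_simps)
  moreover have "A * (exp m + exp m * (0 - m)) \<le> A * exp 0"
    using assms(2) by (intro mult_left_mono exp_ge_tangent)
  ultimately have "Z * exp m \<le> A + (\<Sum>j\<in>J. exp (z j))"
    unfolding Z_def S1_def[symmetric] by (simp add: algebra_simps)
  then have "ln (Z * exp m) \<le> ln (A + (\<Sum>j\<in>J. exp (z j)))"
    using \<open>Z > 0\<close> by (intro ln_mono) auto
  then show ?thesis
    using \<open>Z > 0\<close> by (simp add: ln_mult m_def)
qed (simp add: Z_def)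

lemma nn_integral_ge_affine_minorant:
  assumes "prob_space M" and "g \<in> borel_measurable M" and "integrable M h" and "(\<integral>y. h y \<partial>M) = 0"
    and "\<And>y. y \<in> space M \<Longrightarrow> K + h y \<le> g y"
  shows "ennreal K \<le> (\<integral>\<^sup>+y. ennreal (g y) \<partial>M)"
proof -
  interpret prob_space M by fact
  let ?g = "\<lambda>y. max 0 (g y)"
  have eq: "(\<integral>\<^sup>+y. ennreal (g y) \<partial>M) = (\<integral>\<^sup>+y. ennreal (?g y) \<partial>M)"
    by (simp add: ennreal_max_0)
  show ?thesis
  proof (cases "integrable M ?g")
    case True
    have "K = (\<integral>y. K + h y \<partial>M)"
      using assms(3,4) by (simp add: prob_space)
    also have "\<dots> \<le> (\<integral>y. ?g y \<partial>M)"
      using True assms(3,5) by (intro integral_mono) (auto intro: max.coboundedI2)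
    finally have "ennreal K \<le> ennreal (\<integral>y. ?g y \<partial>M)"
      by (rule ennreal_leI)
    also have "\<dots> = (\<integral>\<^sup>+y. ennreal (?g y) \<partial>M)"
      using True by (intro nn_integral_eq_integral[symmetric]) auto
    finally show ?thesis unfolding eq .
  next
    case False
    then have "(\<integral>\<^sup>+y. ennreal (?g y) \<partial>M) = \<infinity>"
      using assms(2) by (intro nn_integral_nonneg_infinite) auto
    then show ?thesis unfolding eq by simp
  qed
qed

lemma nn_integral_ln_sum_exp_jensen:
  fixes X :: "'j \<Rightarrow> 'a \<Rightarrow> real"
  assumes "prob_space M" and "finite J" and "A \<ge> 0"
    and X: "\<And>j. j \<in> J \<Longrightarrow> integrable M (X j)" and Y: "integrable M Y"
  shows "ennreal (ln (A + (\<Sum>j\<in>J. exp (\<integral>y. X j y \<partial>M))) - (\<integral>y. Y y \<partial>M))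
    \<le> (\<integral>\<^sup>+y. ennreal (ln (A + (\<Sum>j\<in>J. exp (X j y))) - Y y) \<partial>M)"
proof -
  interpret prob_space M by fact
  define m where "m j = (\<integral>y. X j y \<partial>M)" for j
  define Z where "Z = A + (\<Sum>j\<in>J. exp (m j))"
  let ?h = "\<lambda>y. (\<Sum>j\<in>J. exp (m j) / Z * (X j y - m j)) - (Y y - (\<integral>y. Y y \<partial>M))"
  show ?thesis unfolding m_def[symmetric]
  proof (rule nn_integral_ge_affine_minorant[where h = ?h])
    show "(\<lambda>y. ln (A + (\<Sum>j\<in>J. exp (X j y))) - Y y) \<in> borel_measurable M"
      using X Y by (auto intro!: borel_measurable_diff borel_measurable_ln borel_measurable_add
          borel_measurable_sum borel_measurable_exp[THEN measurable_compose])
    show "integrable M ?h"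
      using X Y by (intro Bochner_Integration.integrable_diff integrable_sum integrable_mult_right) auto
    show "(\<integral>y. ?h y \<partial>M) = 0"
      using X Y by (simp add: m_def prob_space integral_sum)
    show "ln (A + (\<Sum>j\<in>J. exp (m j))) - (\<integral>y. Y y \<partial>M) + ?h y \<le> ln (A + (\<Sum>j\<in>J. exp (X j y))) - Y y" for y
      using ln_sum_exp_gradient_le[OF assms(2,3), of m "\<lambda>j. X j y"] by (simp add: Z_def)
  qed (fact assms(1))
qed

lemma
  fixes g :: "'a \<Rightarrow> 'b::{banach, second_countable_topology}"
  assumes "\<And>i. i \<in> I \<Longrightarrow> prob_space (M i)" and "i \<in> I" and "integrable (M i) g"
  shows integrable_PiM_component: "integrable (PiM I M) (\<lambda>xs. g (xs i))"
    and integral_PiM_component: "(\<integral>xs. g (xs i) \<partial>PiM I M) = (\<integral>x. g x \<partial>M i)"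
proof -
  have [measurable]: "g \<in> borel_measurable (M i)"
    using assms(3) by measurable
  have component: "(\<lambda>xs. xs i) \<in> measurable (PiM I M) (M i)"
    using assms(2) by measurable
  have distr: "distr (PiM I M) (M i) (\<lambda>xs. xs i) = M i"
    using assms(1,2) by (rule distr_PiM_component)
  show "integrable (PiM I M) (\<lambda>xs. g (xs i))"
    using integrable_distr_eq[OF component, of g] assms(3) unfolding distr by simp
  show "(\<integral>xs. g (xs i) \<partial>PiM I M) = (\<integral>x. g x \<partial>M i)"
    using integral_distr[OF component, of g] unfolding distr by simp
qed

definition contrastive_loss :: "('x \<Rightarrow> real^'d) \<Rightarrow> nat \<Rightarrow> 'x \<times> 'x \<Rightarrow> (nat \<Rightarrow> 'x) \<Rightarrow> real" where
  "contrastive_loss f N p xs = - ln (exp (f (fst p) \<bullet> f (snd p)) /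
     (exp (f (fst p) \<bullet> f (snd p)) + (\<Sum>i<N. exp (f (fst p) \<bullet> f (xs i)))))"

lemma contrastive_loss_eq:
  "contrastive_loss f N (x, y) xs = ln (exp (f x \<bullet> f y) + (\<Sum>i<N. exp (f x \<bullet> f (xs i)))) - f x \<bullet> f y"
proof -
  have "0 < exp (f x \<bullet> f y) + (\<Sum>i<N. exp (f x \<bullet> f (xs i)))"
    by (intro add_pos_nonneg sum_nonneg) auto
  then show ?thesis
    by (simp add: contrastive_loss_def ln_divide_pos)
qed

lemma borel_measurable_contrastive_loss[measurable]:
  assumes [measurable]: "f \<in> borel_measurable S"
  shows "(\<lambda>(p, xs). contrastive_loss f N p xs) \<in> borel_measurable ((S \<Otimes>\<^sub>M S) \<Otimes>\<^sub>M PiM {..<N} (\<lambda>_. S))"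
  unfolding contrastive_loss_def by measurable

lemma borel_measurable_nn_integral_contrastive_loss:
  assumes "f \<in> borel_measurable S" and "sets A = sets (S \<Otimes>\<^sub>M S)"
    and "sigma_finite_measure B" and "sets B = sets (PiM {..<N} (\<lambda>_. S))"
  shows "(\<lambda>p. \<integral>\<^sup>+xs. ennreal (contrastive_loss f N p xs) \<partial>B) \<in> borel_measurable A"
proof -
  interpret sigma_finite_measure B by fact
  have sets_eq: "sets (A \<Otimes>\<^sub>M B) = sets ((S \<Otimes>\<^sub>M S) \<Otimes>\<^sub>M PiM {..<N} (\<lambda>_. S))"
    using assms(2,4) by (rule sets_pair_measure_cong)
  have "(\<lambda>(p, xs). contrastive_loss f N p xs) \<in> borel_measurable (A \<Otimes>\<^sub>M B)"
    unfolding measurable_cong_sets[OF sets_eq refl] using assms(1) by (rule borel_measurable_contrastive_loss)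
  then show ?thesis
    by (intro borel_measurable_nn_integral) (simp add: case_prod_beta')
qed

lemma neg_ln_softmax_le_covering:
  fixes u :: "'c::finite \<Rightarrow> real"
  assumes "cs \<in> covering_draws N"
  shows "- ln (exp (u c) / (\<Sum>c'\<in>UNIV. exp (u c'))) \<le> ln (exp (u c) + (\<Sum>i<N. exp (u (cs i)))) - u c"
proof -
  have "UNIV = cs ` {..<N}"
    using assms by (auto simp: covering_draws_def image_iff) (metis lessThan_iff)
  then have "(\<Sum>c'\<in>UNIV. exp (u c')) \<le> (\<Sum>i<N. exp (u (cs i)))"
    using sum_image_le[of "{..<N}" "\<lambda>c'. exp (u c')" cs] by simp
  also have "\<dots> \<le> exp (u c) + (\<Sum>i<N. exp (u (cs i)))"
    by simp
  finally have "ln (\<Sum>c'\<in>UNIV. exp (u c')) \<le> ln (exp (u c) + (\<Sum>i<N. exp (u (cs i))))"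
    by (intro ln_mono) (auto intro: sum_pos)
  then show ?thesis
    by (simp add: ln_divide_pos sum_pos)
qed

definition L_un_given_classes ::
    "('c \<Rightarrow> 'x measure) \<Rightarrow> nat \<Rightarrow> ('x \<Rightarrow> real^'d) \<Rightarrow> 'c \<Rightarrow> (nat \<Rightarrow> 'c) \<Rightarrow> ennreal" where
  "L_un_given_classes D N f c cs =
     (\<integral>\<^sup>+p. \<integral>\<^sup>+xs. ennreal (contrastive_loss f N p xs) \<partial>PiM {..<N} (\<lambda>i. D (cs i)) \<partial>(D c \<Otimes>\<^sub>M D c))"

lemma contrastive_loss_at_means_le_nn_integral:
  fixes D :: "'c \<Rightarrow> 'x measure" and f :: "'x \<Rightarrow> real^'d"
  assumes P: "\<And>c. prob_space (D c)" and I: "\<And>c. integrable (D c) f"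
  shows "ennreal (ln (exp (f x \<bullet> f y) + (\<Sum>i<N. exp (f x \<bullet> W_mu D f (cs i)))) - f x \<bullet> f y)
    \<le> (\<integral>\<^sup>+xs. ennreal (contrastive_loss f N (x, y) xs) \<partial>PiM {..<N} (\<lambda>i. D (cs i)))"
proof -
  interpret negatives: prob_space "PiM {..<N} (\<lambda>i. D (cs i))"
    using P by (intro prob_space_PiM) auto
  have "(\<integral>xs. f x \<bullet> f (xs i) \<partial>PiM {..<N} (\<lambda>i. D (cs i))) = f x \<bullet> W_mu D f (cs i)" if "i < N" for i
    using P I that by (subst integral_PiM_component[where g = "\<lambda>z. f x \<bullet> f z"]) (auto simp: W_mu_def)
  then have "(\<Sum>i<N. exp (\<integral>xs. f x \<bullet> f (xs i) \<partial>PiM {..<N} (\<lambda>i. D (cs i))))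
      = (\<Sum>i<N. exp (f x \<bullet> W_mu D f (cs i)))"
    by (intro sum.cong) auto
  moreover have "ennreal (ln (exp (f x \<bullet> f y) +
        (\<Sum>i<N. exp (\<integral>xs. f x \<bullet> f (xs i) \<partial>PiM {..<N} (\<lambda>i. D (cs i)))))
      - (\<integral>xs. f x \<bullet> f y \<partial>PiM {..<N} (\<lambda>i. D (cs i))))
    \<le> (\<integral>\<^sup>+xs. ennreal (ln (exp (f x \<bullet> f y) + (\<Sum>i<N. exp (f x \<bullet> f (xs i)))) - f x \<bullet> f y)
        \<partial>PiM {..<N} (\<lambda>i. D (cs i)))"
    using P I by (intro nn_integral_ln_sum_exp_jensen negatives.prob_space_axioms)
      (auto intro: integrable_PiM_component)
  ultimately show ?thesis
    by (simp add: contrastive_loss_eq negatives.prob_space)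
qed

lemma neg_ln_softmax_mean_le_nn_integral_contrastive_loss:
  fixes D :: "'c::finite \<Rightarrow> 'x measure" and f :: "'x \<Rightarrow> real^'d"
  assumes P: "\<And>c. prob_space (D c)" and I: "\<And>c. integrable (D c) f" and cs: "cs \<in> covering_draws N"
  shows "ennreal (- ln (exp (W_mu D f c \<bullet> f x) / (\<Sum>c'\<in>UNIV. exp (W_mu D f c' \<bullet> f x))))
    \<le> (\<integral>\<^sup>+y. \<integral>\<^sup>+xs. ennreal (contrastive_loss f N (x, y) xs) \<partial>PiM {..<N} (\<lambda>i. D (cs i)) \<partial>D c)"
proof -
  define B where "B = (\<Sum>i<N. exp (f x \<bullet> W_mu D f (cs i)))"
  have "B \<ge> 0"
    by (simp add: B_def sum_nonneg)
  have "- ln (exp (W_mu D f c \<bullet> f x) / (\<Sum>c'\<in>UNIV. exp (W_mu D f c' \<bullet> f x)))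
      \<le> ln (B + exp (f x \<bullet> W_mu D f c)) - f x \<bullet> W_mu D f c"
    using neg_ln_softmax_le_covering[OF cs, of "\<lambda>c. f x \<bullet> W_mu D f c" c]
    by (simp add: B_def inner_commute add.commute)
  then have "ennreal (- ln (exp (W_mu D f c \<bullet> f x) / (\<Sum>c'\<in>UNIV. exp (W_mu D f c' \<bullet> f x))))
      \<le> ennreal (ln (B + exp (f x \<bullet> W_mu D f c)) - f x \<bullet> W_mu D f c)"
    by (rule ennreal_leI)
  also have "\<dots> \<le> (\<integral>\<^sup>+y. ennreal (ln (B + exp (f x \<bullet> f y)) - f x \<bullet> f y) \<partial>D c)"
    using nn_integral_ln_sum_exp_jensen[OF P[of c] _ \<open>B \<ge> 0\<close>, of "{()}" "\<lambda>_ y. f x \<bullet> f y" "\<lambda>y. f x \<bullet> f y"] I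
    by (simp add: W_mu_def)
  also have "\<dots> \<le> (\<integral>\<^sup>+y. \<integral>\<^sup>+xs. ennreal (contrastive_loss f N (x, y) xs) \<partial>PiM {..<N} (\<lambda>i. D (cs i)) \<partial>D c)"
    using contrastive_loss_at_means_le_nn_integral[OF P I]
    by (intro nn_integral_mono) (simp add: B_def add.commute)
  finally show ?thesis .
qed

lemma borel_measurable_nn_integral_contrastive_loss_given_classes:
  fixes D :: "'c \<Rightarrow> 'x measure"
  assumes "\<And>c. prob_space (D c)" and "\<And>c. sets (D c) = sets S" and "f \<in> borel_measurable S"
  shows "(\<lambda>p. \<integral>\<^sup>+xs. ennreal (contrastive_loss f N p xs) \<partial>PiM {..<N} (\<lambda>i. D (cs i)))
    \<in> borel_measurable (D c \<Otimes>\<^sub>M D c)"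
  using assms by (intro borel_measurable_nn_integral_contrastive_loss prob_space_imp_sigma_finite
      prob_space_PiM sets_PiM_cong) auto

lemma sup_loss_mean_le_L_un_given_classes:
  fixes D :: "'c::finite \<Rightarrow> 'x measure" and f :: "'x \<Rightarrow> real^'d"
  assumes P: "\<And>c. prob_space (D c)" and S: "\<And>c. sets (D c) = sets S" and fm: "f \<in> borel_measurable S"
    and I: "\<And>c. integrable (D c) f" and cs: "cs \<in> covering_draws N"
  shows "(\<integral>\<^sup>+x. ennreal (- ln (exp (W_mu D f c \<bullet> f x) / (\<Sum>c'\<in>UNIV. exp (W_mu D f c' \<bullet> f x)))) \<partial>D c)
    \<le> L_un_given_classes D N f c cs"
proof -
  interpret sigma_finite_measure "D c"
    by (simp add: P prob_space_imp_sigma_finite)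
  have "(\<integral>\<^sup>+x. ennreal (- ln (exp (W_mu D f c \<bullet> f x) / (\<Sum>c'\<in>UNIV. exp (W_mu D f c' \<bullet> f x)))) \<partial>D c)
      \<le> (\<integral>\<^sup>+x. \<integral>\<^sup>+y. \<integral>\<^sup>+xs. ennreal (contrastive_loss f N (x, y) xs) \<partial>PiM {..<N} (\<lambda>i. D (cs i)) \<partial>D c \<partial>D c)"
    using P I cs by (intro nn_integral_mono neg_ln_softmax_mean_le_nn_integral_contrastive_loss)
  also have "\<dots> = L_un_given_classes D N f c cs"
    unfolding L_un_given_classes_def
    using borel_measurable_nn_integral_contrastive_loss_given_classes[where D = D, OF P S fm] by (rule nn_integral_fst)
  finally show ?thesis .
qed

lemma nn_integral_contrastive_loss_D_neg:
  fixes \<rho> :: "'c::finite pmf" and D :: "'c \<Rightarrow> 'x measure"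
  assumes P: "\<And>c. prob_space (D c)" and S: "\<And>c. sets (D c) = sets S" and "f \<in> borel_measurable S"
    and "p \<in> space (S \<Otimes>\<^sub>M S)"
  shows "(\<integral>\<^sup>+xs. ennreal (contrastive_loss f N p xs) \<partial>PiM {..<N} (\<lambda>_. D_neg \<rho> D))
    = (\<Sum>cs\<in>{..<N} \<rightarrow>\<^sub>E UNIV. ennreal (\<Prod>i<N. pmf \<rho> (cs i)) *
        (\<integral>\<^sup>+xs. ennreal (contrastive_loss f N p xs) \<partial>PiM {..<N} (\<lambda>i. D (cs i))))"
proof -
  from measurable_Pair2[OF borel_measurable_contrastive_loss[OF assms(3)] assms(4)]
  have "(\<lambda>xs. ennreal (contrastive_loss f N p xs)) \<in> borel_measurable (PiM {..<N} (\<lambda>_. S))"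
    by simp
  then show ?thesis
    unfolding D_neg_def by (rule nn_integral_PiM_bind_pmf[OF finite_lessThan P S])
qed

lemma L_un_eq_sum_given_classes:
  fixes \<rho> :: "'c::finite pmf" and D :: "'c \<Rightarrow> 'x measure" and f :: "'x \<Rightarrow> real^'d"
  assumes P: "\<And>c. prob_space (D c)" and S: "\<And>c. sets (D c) = sets S" and fm: "f \<in> borel_measurable S"
  shows "L_un \<rho> D N f = (\<Sum>c\<in>UNIV. ennreal (pmf \<rho> c) *
    (\<Sum>cs\<in>{..<N} \<rightarrow>\<^sub>E UNIV. ennreal (\<Prod>i<N. pmf \<rho> (cs i)) * L_un_given_classes D N f c cs))"
proof -
  have "sets (D_neg \<rho> D) = sets S"
    unfolding D_neg_def by (rule sets_bind) (auto simp: S)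
  moreover have "prob_space (D_neg \<rho> D)"
    unfolding D_neg_def using P S by (rule prob_space_bind_pmf_kernel)
  ultimately have "(\<lambda>p. \<integral>\<^sup>+xs. ennreal (contrastive_loss f N p xs) \<partial>PiM {..<N} (\<lambda>_. D_neg \<rho> D))
      \<in> borel_measurable (S \<Otimes>\<^sub>M S)"
    using fm by (intro borel_measurable_nn_integral_contrastive_loss prob_space_imp_sigma_finite
        prob_space_PiM sets_PiM_cong) auto
  then have "L_un \<rho> D N f = (\<Sum>c\<in>UNIV. ennreal (pmf \<rho> c) *
      (\<integral>\<^sup>+p. \<integral>\<^sup>+xs. ennreal (contrastive_loss f N p xs) \<partial>PiM {..<N} (\<lambda>_. D_neg \<rho> D) \<partial>(D c \<Otimes>\<^sub>M D c)))"
    unfolding L_un_def D_sim_def contrastive_loss_def[symmetric] using P S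
    by (intro nn_integral_bind_pmf_finite prob_space_pair) (simp_all add: S)
  also have "\<dots> = (\<Sum>c\<in>UNIV. ennreal (pmf \<rho> c) *
      (\<integral>\<^sup>+p. (\<Sum>cs\<in>{..<N} \<rightarrow>\<^sub>E UNIV. ennreal (\<Prod>i<N. pmf \<rho> (cs i)) *
        (\<integral>\<^sup>+xs. ennreal (contrastive_loss f N p xs) \<partial>PiM {..<N} (\<lambda>i. D (cs i)))) \<partial>(D c \<Otimes>\<^sub>M D c)))"
    using P S fm by (intro sum.cong refl arg_cong2[where f = "(*)"] nn_integral_cong
        nn_integral_contrastive_loss_D_neg) (simp_all add: S cong: sets_eq_imp_space_eq)
  also have "\<dots> = (\<Sum>c\<in>UNIV. ennreal (pmf \<rho> c) *
    (\<Sum>cs\<in>{..<N} \<rightarrow>\<^sub>E UNIV. ennreal (\<Prod>i<N. pmf \<rho> (cs i)) * L_un_given_classes D N f c cs))"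
    unfolding L_un_given_classes_def
    using borel_measurable_nn_integral_contrastive_loss_given_classes[where D = D, OF P S fm]
    by (subst nn_integral_sum) (auto simp: nn_integral_cmult)
  finally show ?thesis .
qed

lemma p_cc_mult_L_sup_mu_le_L_un:
  fixes \<rho> :: "'c::finite pmf" and D :: "'c \<Rightarrow> 'x measure" and f :: "'x \<Rightarrow> real^'d"
  assumes P: "\<And>c. prob_space (D c)" and S: "\<And>c. sets (D c) = sets S" and fm: "f \<in> borel_measurable S"
    and I: "\<And>c. integrable (D c) f"
  shows "ennreal (p_cc \<rho> N) * L_sup_mu \<rho> D f \<le> L_un \<rho> D N f"
proof -
  define w where "w cs = ennreal (\<Prod>i<N. pmf \<rho> (cs i))" for cs :: "nat \<Rightarrow> 'c"
  define loss where "loss c = (\<integral>\<^sup>+x. ennreal (- ln (exp (W_mu D f c \<bullet> f x) /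
    (\<Sum>c'\<in>UNIV. exp (W_mu D f c' \<bullet> f x)))) \<partial>D c)" for c
  have "ennreal (p_cc \<rho> N) = (\<Sum>cs\<in>covering_draws N. w cs)"
    by (simp add: p_cc_eq_sum w_def prod_nonneg)
  then have "ennreal (p_cc \<rho> N) * L_sup_mu \<rho> D f
      = (\<Sum>c\<in>UNIV. ennreal (pmf \<rho> c) * (\<Sum>cs\<in>covering_draws N. w cs * loss c))"
    by (simp add: L_sup_mu_def sup_loss_W_def loss_def sum_distrib_left sum_distrib_right mult_ac)
  also have "\<dots> \<le> (\<Sum>c\<in>UNIV. ennreal (pmf \<rho> c) *
      (\<Sum>cs\<in>covering_draws N. w cs * L_un_given_classes D N f c cs))"
    unfolding loss_def using P S fm I
    by (intro sum_mono mult_left_mono sup_loss_mean_le_L_un_given_classes) auto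
  also have "\<dots> \<le> (\<Sum>c\<in>UNIV. ennreal (pmf \<rho> c) *
      (\<Sum>cs\<in>{..<N} \<rightarrow>\<^sub>E UNIV. w cs * L_un_given_classes D N f c cs))"
    by (intro sum_mono mult_left_mono sum_mono2) (auto simp: covering_draws_def finite_PiE)
  also have "\<dots> = L_un \<rho> D N f"
    unfolding w_def using P S fm by (rule L_un_eq_sum_given_classes[symmetric])
  finally show ?thesis .
qed

theorem lemma3p2:
  fixes \<rho> :: "'c::finite pmf" and D :: "'c \<Rightarrow> 'x measure" and S :: "'x measure"
    and f :: "'x \<Rightarrow> real^'d" and N :: nat
  assumes "\<forall>c. pmf \<rho> c > 0"
    and "\<forall>c. prob_space (D c)"
    and "\<forall>c. sets (D c) = sets S"
    and "f \<in> borel_measurable S"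
    and "\<forall>c. integrable (D c) f"
    and "N \<ge> CARD('c)"
  shows "L_sup \<rho> D f \<le> L_sup_mu \<rho> D f \<and> L_sup_mu \<rho> D f \<le> L_un \<rho> D N f / ennreal (p_cc \<rho> N)"
proof
  show "L_sup \<rho> D f \<le> L_sup_mu \<rho> D f"
    unfolding L_sup_def L_sup_mu_def by (rule INF_lower) simp
  have "p_cc \<rho> N > 0"
    using assms(1,6) by (intro p_cc_pos) auto
  then have "L_sup_mu \<rho> D f = ennreal (p_cc \<rho> N) * L_sup_mu \<rho> D f / ennreal (p_cc \<rho> N)"
    by (simp add: ennreal_mult_divide_eq mult.commute)
  also have "\<dots> \<le> L_un \<rho> D N f / ennreal (p_cc \<rho> N)"
    using assms(2-5) by (intro divide_right_mono_ennreal p_cc_mult_L_sup_mu_le_L_un) auto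
  finally show "L_sup_mu \<rho> D f \<le> L_un \<rho> D N f / ennreal (p_cc \<rho> N)" .
qed

end
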